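(* Under the setting of the context, assume $P(z)$ is primitive, $\mathbf{x}_0\neq 0$, and $h_0(z)\neq 0$. Then there exist $w_{j,l-1}\in\mathbb{F}_2$ ($0\le j\le k(v)$, $1\le l\le v$), not all zero, with $\sum_{l=1}^{v}\sum_{j=0}^{k(v)} w_{j,l-1}y_{i+j,l-1}=0$ for all $i\ge0$; and for every integer $k$ with $0\le k<k(v)$, the only coefficients $w_{j,l-1}\in\mathbb{F}_2$ ($0\le j\le k$, $1\le l\le v$) satisfying $\sum_{l=1}^{v}\sum_{j=0}^{k} w_{j,l-1}y_{i+j,l-1}=0$ for all $i\ge 0$ are all zero.
   Context: An $\mathbb{F}_2$-linear generator: a $p\times p$ matrix $\mathbf{A}$ and $w\times p$ matrix $\mathbf{B}$ over $\mathbb{F}_2$, states $\mathbf{x}_i=\mathbf{A}\mathbf{x}_{i-1}$, outputs $\mathbf{y}_i=\mathbf{B}\mathbf{x}_i={}^t(y_{i,0},\dots,y_{i,w-1})$, and $u_i=\sum_{l=1}^w y_{i,l-1}2^{-l}\in[0,1)$; $P(z)=\det(\mathbf{I}z-\mathbf{A})$. Fix $1\le v\le w$. For $k\ge1$, let $\Psi_k$ be the multiset $\{(u_0,\dots,u_{k-1}) : \mathbf{x}_0\in\mathbb{F}_2^p\}$. Dividing $[0,1)$ into $2^v$ equal intervals partitions $[0,1)^k$ into $2^{kv}$ equal cubic cells; the generator is $k$-dimensionally equidistributed with $v$-bit accuracy if each cell contains exactly $2^{p-kv}$ points of $\Psi_k$, and $k(v)$ is the largest such $k$. Also $G_{l-1}(z):=\sum_{i\ge0}y_{i,l-1}z^{-i-1}=h_{l-1}(z)/P(z)$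 with $h_{l-1}\in\mathbb{F}_2[z]$ for the given nonzero $\mathbf{x}_0$. *)

theory Defs
  imports "HOL-Library.Z2" "Jordan_Normal_Form.Char_Poly"
begin

text \<open>An F2-linear generator: A is p x p, B is w x p, over the field bit (= F2).
  Coordinates are indexed from 0: y i l is the entry y_{i,l} (0 <= l < w).\<close>

definition state :: "bit mat \<Rightarrow> bit vec \<Rightarrow> nat \<Rightarrow> bit vec" where
  "state A x0 i = (A ^\<^sub>m i) *\<^sub>v x0"

definition outp :: "bit mat \<Rightarrow> bit mat \<Rightarrow> bit vec \<Rightarrow> nat \<Rightarrow> nat \<Rightarrow> bit" where
  "outp A B x0 i l = (B *\<^sub>v state A x0 i) $ l"

definition bit_val :: "bit \<Rightarrow> real" where
  "bit_val b = (if b = 1 then 1 else 0)"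

definition uval :: "bit mat \<Rightarrow> bit mat \<Rightarrow> nat \<Rightarrow> bit vec \<Rightarrow> nat \<Rightarrow> real" where
  "uval A B w x0 i = (\<Sum>l=1..w. bit_val (outp A B x0 i (l - 1)) * 2 powr (- real l))"

definition cell :: "nat \<Rightarrow> real \<Rightarrow> int" where
  "cell v u = \<lfloor>u * 2 ^ v\<rfloor>"

text \<open>k-dimensional equidistribution with v-bit accuracy: each of the 2^(kv) cubic cells,
  indexed by c : {0..<k} -> {0..<2^v}, contains exactly 2^(p-kv) points of the multiset
  Psi_k (points counted with multiplicity over all x0 in F2^p).\<close>
definition equidist :: "nat \<Rightarrow> bit mat \<Rightarrow> bit mat \<Rightarrow> nat \<Rightarrow> nat \<Rightarrow> nat \<Rightarrow> bool" where
  "equidist p A B w v k =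
     (\<forall>c :: nat \<Rightarrow> int. (\<forall>j<k. 0 \<le> c j \<and> c j < 2 ^ v) \<longrightarrow>
        real (card {x0 \<in> carrier_vec p. \<forall>j<k. cell v (uval A B w x0 j) = c j})
          = 2 powr (real p - real k * real v))"

definition kv :: "nat \<Rightarrow> bit mat \<Rightarrow> bit mat \<Rightarrow> nat \<Rightarrow> nat \<Rightarrow> nat" where
  "kv p A B w v = (GREATEST k. equidist p A B w v k)"

definition primitive_poly :: "nat \<Rightarrow> bit poly \<Rightarrow> bool" where
  "primitive_poly p P = (degree P = p \<and> p \<ge> 1 \<and> monic P \<and> irreducible P \<and>
     P dvd (monom 1 (2 ^ p - 1) - 1) \<and>
     (\<forall>e. 0 < e \<and> e < 2 ^ p - 1 \<longrightarrow> \<not> P dvd (monom 1 e - 1)))"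

text \<open>h_{l-1} = P * G_{l-1}, where G_{l-1}(z) = sum_{i>=0} y_{i,l-1} z^{-i-1}. Its coefficient
  of z^n (n >= 0) is sum_{m=n+1}^{p} [z^m]P * y_{m-n-1,l-1}; this is the polynomial part of
  the product (the negative-power part vanishes by Cayley-Hamilton).\<close>
definition hpoly :: "nat \<Rightarrow> bit mat \<Rightarrow> bit mat \<Rightarrow> bit vec \<Rightarrow> nat \<Rightarrow> bit poly" where
  "hpoly p A B x0 l = Poly (map (\<lambda>n. \<Sum>m=n+1..p. coeff (char_poly A) m * outp A B x0 (m - n - 1) l)
                           [0..<p])"

end

theory Submission
  imports Defs
begin

text \<open>
  The output bit \<open>y\<^sub>j\<^sub>,\<^sub>l\<close> is the value at \<open>x\<^sub>0\<close> of the linear functional \<open>r\<^sub>j\<^sub>,\<^sub>l\<close>, the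
  \<open>l\<close>-th row of \<open>B A\<^sup>j\<close>. The cell of \<open>(u\<^sub>0, \<dots>, u\<^sub>k\<^sub>-\<^sub>1)\<close> is read off from the first \<open>v\<close>
  binary digits of each \<open>u\<^sub>j\<close>, and a system of \<open>m\<close> independent linear equations over
  \<open>\<bbbF>\<^sub>2\<close> has \<open>2\<^sup>p\<^sup>-\<^sup>m\<close> solutions for every right-hand side; so the generator is
  \<open>k\<close>-dimensionally equidistributed with \<open>v\<close>-bit accuracy exactly when the functionals
  \<open>r\<^sub>j\<^sub>,\<^sub>l\<close> with \<open>j < k\<close>, \<open>l < v\<close> are linearly independent.

  Hence the functionals with \<open>j \<le> k(v)\<close> are dependent, and evaluating a dependency along
  the orbit \<open>A\<^sup>i x\<^sub>0\<close> gives the nontrivial relation. Conversely, a relation with \<open>k < k(v)\<close>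
  makes \<open>f = \<Sum> w\<^sub>j\<^sub>,\<^sub>l r\<^sub>j\<^sub>,\<^sub>l\<close> vanish on the whole orbit of \<open>x\<^sub>0 \<noteq> 0\<close>. When \<open>P\<close> is
  irreducible this forces \<open>f = 0\<close>: by Cayley-Hamilton \<open>P\<close> annihilates \<open>f\<close>, so the
  annihilator of least degree divides \<open>P\<close>, and a nonzero \<open>f\<close> would make
  \<open>f, A\<^sup>T f, \<dots>, (A\<^sup>T)\<^sup>p\<^sup>-\<^sup>1 f\<close> independent, leaving \<open>0\<close> as their only common zero. Then
  independence gives \<open>w = 0\<close>.
\<close>

section \<open>Linear functionals over \<open>\<bbbF>\<^sub>2\<close>\<close>

declare add_bit_eq_xor [simp del] mult_bit_eq_and [simp del]

lemma UNIV_bit: "(UNIV :: bit set) = {0, 1}"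
  using bit.exhaust by auto

lemma card_carrier_vec_bit: "card (carrier_vec n :: bit vec set) = 2 ^ n"
proof -
  let ?L = "{xs. set xs \<subseteq> (UNIV :: bit set) \<and> length xs = n}"
  have "bij_betw list_of_vec (carrier_vec n :: bit vec set) ?L"
  proof (rule bij_betw_byWitness[where f' = vec_of_list])
    show "\<forall>v\<in>carrier_vec n. vec_of_list (list_of_vec v) = v" by (simp add: vec_list)
    show "\<forall>xs\<in>?L. list_of_vec (vec_of_list xs) = xs" by (simp add: list_vec)
    show "list_of_vec ` carrier_vec n \<subseteq> ?L" by auto
    show "vec_of_list ` ?L \<subseteq> carrier_vec n" by (auto intro: carrier_vecI)
  qed
  then have "card (carrier_vec n :: bit vec set) = card ?L" by (rule bij_betw_same_card)
  also have "\<dots> = card (UNIV :: bit set) ^ n" by (rule card_lists_length_eq) (simp add: UNIV_bit)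
  also have "card (UNIV :: bit set) = 2" by (simp add: UNIV_bit)
  finally show ?thesis .
qed

lemma finite_carrier_vec_bit [simp]: "finite (carrier_vec n :: bit vec set)"
  using card_carrier_vec_bit[of n] by (intro card_ge_0_finite) simp

lemma bit_add_self [simp]: "(b :: bit) + b = 0"
  by (cases b) simp_all

lemma bit_add_eq_0_iff: "(a :: bit) + b = 0 \<longleftrightarrow> a = b"
  by (cases a; cases b) (simp_all add: add_bit_eq_xor)

lemma bit_vec_add_self_cancel:
  assumes "(x :: bit vec) \<in> carrier_vec n" "k \<in> carrier_vec n"
  shows "x + k + k = x"
  using assms by (intro eq_vecI) (auto simp: add.assoc)

definition solutions ::
    "nat \<Rightarrow> ('i \<Rightarrow> 'a :: semiring_0 vec) \<Rightarrow> 'i set \<Rightarrow> ('i \<Rightarrow> 'a) \<Rightarrow> 'a vec set"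
  where "solutions n r I t = {x \<in> carrier_vec n. \<forall>i\<in>I. r i \<bullet> x = t i}"

definition indep_functionals :: "nat \<Rightarrow> ('i \<Rightarrow> 'a :: semiring_0 vec) \<Rightarrow> 'i set \<Rightarrow> bool"
  where "indep_functionals n r I \<longleftrightarrow>
    (\<forall>c. (\<forall>x\<in>carrier_vec n. (\<Sum>i\<in>I. c i * (r i \<bullet> x)) = 0) \<longrightarrow> (\<forall>i\<in>I. c i = 0))"

lemma indep_functionals_subset:
  assumes indep: "indep_functionals n r I" and "J \<subseteq> I" "finite I"
  shows "indep_functionals n r J"
  unfolding indep_functionals_def
proof (intro allI impI ballI)
  fix c i assume rel: "\<forall>x\<in>carrier_vec n. (\<Sum>i\<in>J. c i * (r i \<bullet> x)) = 0" and i: "i \<in> J"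
  let ?c = "\<lambda>i. if i \<in> J then c i else 0"
  have "(\<Sum>i\<in>I. ?c i * (r i \<bullet> x)) = (\<Sum>i\<in>J. c i * (r i \<bullet> x))" for x
    using assms(2,3) by (intro sum.mono_neutral_cong_right) auto
  then have "\<forall>x\<in>carrier_vec n. (\<Sum>i\<in>I. ?c i * (r i \<bullet> x)) = 0" using rel by simp
  then have "\<forall>i\<in>I. ?c i = 0"
    by (rule mp[OF spec[OF indep[unfolded indep_functionals_def], of ?c]])
  then have "?c i = 0" using i \<open>J \<subseteq> I\<close> by blast
  then show "c i = 0" using i by simp
qed

lemma indep_functionals_if_solvable:
  fixes r :: "'i \<Rightarrow> 'a :: semiring_1 vec"
  assumes "\<And>t. solutions n r I t \<noteq> {}" "finite I"
  shows "indep_functionals n r I"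
  unfolding indep_functionals_def
proof (intro allI impI ballI)
  fix c a assume rel: "\<forall>x\<in>carrier_vec n. (\<Sum>i\<in>I. c i * (r i \<bullet> x)) = 0" and a: "a \<in> I"
  obtain x where x: "x \<in> solutions n r I (\<lambda>i. if i = a then 1 else 0)"
    using assms(1) by blast
  have "c a = (\<Sum>i\<in>I. if i = a then c i else 0)" using a assms(2) by simp
  also have "\<dots> = (\<Sum>i\<in>I. c i * (r i \<bullet> x))"
    using x by (intro sum.cong) (auto simp: solutions_def)
  also have "\<dots> = 0" using rel x unfolding solutions_def by blast
  finally show "c a = 0" .
qed

lemma scalar_prod_lincomb:
  fixes a :: "'i \<Rightarrow> 'a :: comm_semiring_0"
  assumes v: "v \<in> carrier_vec n" and e: "\<forall>i\<in>I. e i \<in> carrier_vec n"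
  shows "v \<bullet> vec n (\<lambda>q. \<Sum>i\<in>I. a i * e i $ q) = (\<Sum>i\<in>I. a i * (v \<bullet> e i))"
proof -
  have "v \<bullet> vec n (\<lambda>q. \<Sum>i\<in>I. a i * e i $ q) = (\<Sum>q<n. \<Sum>i\<in>I. a i * (v $ q * e i $ q))"
    unfolding scalar_prod_def using v
    by (simp add: lessThan_atLeast0 sum_distrib_left mult.left_commute)
  also have "\<dots> = (\<Sum>i\<in>I. \<Sum>q<n. a i * (v $ q * e i $ q))"
    by (rule sum.swap)
  also have "\<dots> = (\<Sum>i\<in>I. a i * (v \<bullet> e i))"
  proof (rule sum.cong[OF refl])
    fix i assume "i \<in> I"
    then have "dim_vec (e i) = n" using e by auto
    then show "(\<Sum>q<n. a i * (v $ q * e i $ q)) = a i * (v \<bullet> e i)"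
      by (simp add: scalar_prod_def lessThan_atLeast0 sum_distrib_left)
  qed
  finally show ?thesis .
qed

text \<open>If there were no such \<open>k\<close>, then \<open>r a\<close> would be the combination
  \<open>\<Sum>i\<in>I. (r a \<bullet> e i) \<cdot> r i\<close>, where \<open>e i\<close> solves the \<open>i\<close>-th unit system.\<close>

lemma exists_separating_vec:
  fixes r :: "'i \<Rightarrow> bit vec"
  assumes fin: "finite I" and aI: "a \<notin> I" and r: "\<forall>i\<in>insert a I. r i \<in> carrier_vec n"
    and indep: "indep_functionals n r (insert a I)"
    and solvable: "\<And>t. solutions n r I t \<noteq> {}"
  shows "\<exists>k\<in>carrier_vec n. (\<forall>i\<in>I. r i \<bullet> k = 0) \<and> r a \<bullet> k = 1"
proof (rule ccontr)
  assume "\<not> ?thesis"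
  then have orth: "r a \<bullet> k = 0" if "k \<in> carrier_vec n" "\<forall>i\<in>I. r i \<bullet> k = 0" for k
    using that by auto
  define e where "e i = (SOME x. x \<in> solutions n r I (\<lambda>j. if j = i then 1 else 0))" for i
  have "e i \<in> solutions n r I (\<lambda>j. if j = i then 1 else 0)" for i
    unfolding e_def using solvable by (metis some_in_eq)
  then have e: "\<forall>i\<in>I. e i \<in> carrier_vec n"
    and e_unit: "\<And>i j. j \<in> I \<Longrightarrow> r j \<bullet> e i = (if j = i then 1 else 0)"
    unfolding solutions_def by auto
  define c where "c i = (if i = a then 1 else r a \<bullet> e i)" for i
  have "\<forall>x\<in>carrier_vec n. (\<Sum>i\<in>insert a I. c i * (r i \<bullet> x)) = 0"
  proof
    fix x :: "bit vec" assume x: "x \<in> carrier_vec n"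
    define y where "y = vec n (\<lambda>q. \<Sum>i\<in>I. (r i \<bullet> x) * e i $ q)"
    have y: "y \<in> carrier_vec n" unfolding y_def by simp
    have ry: "u \<bullet> y = (\<Sum>i\<in>I. (r i \<bullet> x) * (u \<bullet> e i))" if "u \<in> carrier_vec n" for u
      unfolding y_def using that e by (rule scalar_prod_lincomb)
    have "r j \<bullet> y = r j \<bullet> x" if j: "j \<in> I" for j
      using ry[of "r j"] r j fin by (simp add: e_unit[OF j] if_distrib cong: if_cong)
    then have "r a \<bullet> (x + y) = 0"
      using r x y by (intro orth) (auto simp: scalar_prod_add_distrib)
    moreover have "r a \<bullet> (x + y) = r a \<bullet> x + r a \<bullet> y"
      using r x y by (auto intro: scalar_prod_add_distrib)
    ultimately have "r a \<bullet> x = r a \<bullet> y" by (simp add: bit_add_eq_0_iff)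
    have "(\<Sum>i\<in>I. c i * (r i \<bullet> x)) = (\<Sum>i\<in>I. (r i \<bullet> x) * (r a \<bullet> e i))"
      using aI by (intro sum.cong refl) (auto simp: c_def)
    also have "\<dots> = r a \<bullet> y" using ry r by simp
    finally show "(\<Sum>i\<in>insert a I. c i * (r i \<bullet> x)) = 0"
      using fin aI \<open>r a \<bullet> x = r a \<bullet> y\<close> by (simp add: c_def)
  qed
  then have "c a = 0" using indep unfolding indep_functionals_def by blast
  then show False by (simp add: c_def)
qed

lemma card_solutions_insert:
  fixes r :: "'i \<Rightarrow> bit vec"
  assumes r: "\<forall>i\<in>insert a I. r i \<in> carrier_vec n"
    and k: "k \<in> carrier_vec n" "\<forall>i\<in>I. r i \<bullet> k = 0" "r a \<bullet> k = 1"
  shows "card (solutions n r I t) = 2 * card (solutions n r (insert a I) t)"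
proof -
  let ?S = "solutions n r I t"
  let ?Sa = "solutions n r (insert a I) t"
  let ?Sb = "{x \<in> ?S. r a \<bullet> x \<noteq> t a}"
  have shift: "r i \<bullet> (x + k) = r i \<bullet> x + r i \<bullet> k"
    if "x \<in> carrier_vec n" "i \<in> insert a I" for i x
    using that r k(1) by (auto intro: scalar_prod_add_distrib)
  then have shift_I: "r i \<bullet> (x + k) = r i \<bullet> x" if "x \<in> carrier_vec n" "i \<in> I" for i x
    using that k(2) by simp
  have shift_a: "r a \<bullet> (x + k) = t a \<longleftrightarrow> r a \<bullet> x \<noteq> t a" if "x \<in> carrier_vec n" for x
    using shift[OF that] k(3) by (cases "r a \<bullet> x"; cases "t a") (simp_all add: add_bit_eq_xor)
  have "bij_betw (\<lambda>x. x + k) ?Sa ?Sb"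
  proof (rule bij_betw_byWitness[where f' = "\<lambda>x. x + k"])
    show "\<forall>x\<in>?Sa. x + k + k = x" "\<forall>x\<in>?Sb. x + k + k = x"
      using k(1) by (auto simp: solutions_def bit_vec_add_self_cancel)
    show "(\<lambda>x. x + k) ` ?Sa \<subseteq> ?Sb"
    proof (rule image_subsetI)
      fix x assume "x \<in> ?Sa"
      then have x: "x \<in> carrier_vec n" "\<forall>i\<in>I. r i \<bullet> x = t i" "r a \<bullet> x = t a"
        by (auto simp: solutions_def)
      moreover have "r a \<bullet> (x + k) \<noteq> t a" using shift_a[OF x(1)] x(3) by simp
      ultimately show "x + k \<in> ?Sb"
        using k(1) shift_I[OF x(1)] by (simp add: solutions_def)
    qed
    show "(\<lambda>x. x + k) ` ?Sb \<subseteq> ?Sa"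
    proof (rule image_subsetI)
      fix x assume "x \<in> ?Sb"
      then have x: "x \<in> carrier_vec n" "\<forall>i\<in>I. r i \<bullet> x = t i" "r a \<bullet> x \<noteq> t a"
        by (auto simp: solutions_def)
      moreover have "r a \<bullet> (x + k) = t a" using shift_a[OF x(1)] x(3) by simp
      ultimately show "x + k \<in> ?Sa"
        using k(1) shift_I[OF x(1)] by (simp add: solutions_def)
    qed
  qed
  then have "card ?Sb = card ?Sa" by (simp add: bij_betw_same_card)
  moreover have "?S = ?Sa \<union> ?Sb" "?Sa \<inter> ?Sb = {}"
    unfolding solutions_def by auto
  moreover have "finite ?S"
    unfolding solutions_def by simp
  ultimately show ?thesis by (metis card_Un_disjoint finite_Un mult_2)
qed

theorem card_solutions:
  fixes r :: "'i \<Rightarrow> bit vec"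
  assumes "finite I" "\<forall>i\<in>I. r i \<in> carrier_vec n" "indep_functionals n r I"
  shows "card (solutions n r I t) * 2 ^ card I = 2 ^ n"
  using assms
proof (induction I arbitrary: t rule: finite_induct)
  case empty
  then show ?case by (simp add: solutions_def card_carrier_vec_bit)
next
  case (insert a I)
  have IH: "card (solutions n r I t') * 2 ^ card I = 2 ^ n" for t'
    using insert indep_functionals_subset[OF insert.prems(2) subset_insertI] by blast
  then have "solutions n r I t' \<noteq> {}" for t'
    by (intro notI) (use IH[of t'] in simp)
  then obtain k where "k \<in> carrier_vec n" "\<forall>i\<in>I. r i \<bullet> k = 0" "r a \<bullet> k = 1"
    using exists_separating_vec[OF insert.hyps insert.prems(1,2)] by blast
  then show ?case
    using card_solutions_insert[of a I r n k t] IH[of t] insert by simp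
qed

lemma indep_functionals_card_le:
  fixes r :: "'i \<Rightarrow> bit vec"
  assumes "finite I" "\<forall>i\<in>I. r i \<in> carrier_vec n" "indep_functionals n r I"
  shows "card I \<le> n"
proof -
  have "card (solutions n r I (\<lambda>_. 0)) * 2 ^ card I = 2 ^ n"
    using assms by (rule card_solutions)
  then have "(2::nat) ^ card I \<le> 2 ^ n"
    by (metis dvd_imp_le dvd_triv_right zero_less_numeral zero_less_power)
  then show ?thesis by simp
qed

section \<open>Cayley-Hamilton\<close>

lemma pow_mat_add:
  assumes A: "A \<in> carrier_mat n n"
  shows "A ^\<^sub>m (i + j) = A ^\<^sub>m i * A ^\<^sub>m j"
proof (induction j)
  case 0
  then show ?case using A by simp
next
  case (Suc j)
  then show ?case
    using A by (simp add: assoc_mult_mat[OF pow_carrier_mat[OF A] pow_carrier_mat[OF A] A])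
qed

lemma pow_mat_Suc_left:
  assumes A: "A \<in> carrier_mat n n"
  shows "A ^\<^sub>m Suc k = A * A ^\<^sub>m k"
  using pow_mat_add[OF A, of 1 k] A by simp

lemma coeff_mult_char_poly_matrix:
  fixes q :: "'a :: comm_ring_1 poly"
  assumes "A \<in> carrier_mat n n" "m < n" "j < n"
  shows "coeff (q * char_poly_matrix A $$ (m, j)) k =
     (if m = j \<and> k > 0 then coeff q (k - 1) else 0) - coeff q k * A $$ (m, j)"
proof -
  have "char_poly_matrix A $$ (m, j) = (if m = j then [:0, 1:] else 0) + [:- A $$ (m, j):]"
    using assms unfolding char_poly_matrix_def by simp
  then have "q * char_poly_matrix A $$ (m, j)
      = (if m = j then pCons 0 q else 0) + Polynomial.smult (- A $$ (m, j)) q"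
    by (simp add: algebra_simps)
  then show ?thesis by (cases k) (auto simp: coeff_pCons)
qed

text \<open>The coefficient of \<open>z\<^sup>k\<close> at position \<open>(i, m)\<close> of \<open>adj(zI - A) (zI - A) = P(z) I\<close>.\<close>

lemma coeff_adj_char_poly_matrix:
  fixes A :: "'a :: comm_ring_1 mat"
  assumes A: "A \<in> carrier_mat n n" and i: "i < n" and m: "m < n"
  defines "\<beta> k m' \<equiv> coeff (adj_mat (char_poly_matrix A) $$ (i, m')) k"
  shows "(if k > 0 then \<beta> (k - 1) m else 0) - (\<Sum>m'<n. \<beta> k m' * A $$ (m', m))
    = (if i = m then coeff (char_poly A) k else 0)"
proof -
  let ?C = "char_poly_matrix A"
  have C: "?C \<in> carrier_mat n n" using A by simp
  have adj: "adj_mat ?C \<in> carrier_mat n n" using adj_mat(1)[OF C] .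
  have "(adj_mat ?C * ?C) $$ (i, m) = (\<Sum>m'<n. adj_mat ?C $$ (i, m') * ?C $$ (m', m))"
    using adj C i m by (simp add: scalar_prod_def lessThan_atLeast0)
  then have "coeff ((adj_mat ?C * ?C) $$ (i, m)) k
      = (\<Sum>m'<n. (if m' = m \<and> k > 0 then \<beta> (k - 1) m' else 0) - \<beta> k m' * A $$ (m', m))"
    using A m unfolding \<beta>_def by (simp add: coeff_sum coeff_mult_char_poly_matrix)
  also have "\<dots> = (\<Sum>m'<n. if m' = m \<and> k > 0 then \<beta> (k - 1) m' else 0)
      - (\<Sum>m'<n. \<beta> k m' * A $$ (m', m))"
    by (simp add: sum_subtractf)
  also have "\<dots> = (if k > 0 then \<beta> (k - 1) m else 0) - (\<Sum>m'<n. \<beta> k m' * A $$ (m', m))"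
    using m by (cases "k > 0") simp_all
  finally show ?thesis
    using adj_mat(3)[OF C] i m by (cases "i = m") (simp_all add: char_poly_def)
qed

text \<open>With the previous identity, \<open>c\<^sub>k (A\<^sup>k)\<^sub>i\<^sub>j\<close> is a difference of consecutive terms, so
  \<open>\<Sum>\<^sub>k c\<^sub>k (A\<^sup>k)\<^sub>i\<^sub>j\<close> telescopes.\<close>

lemma char_poly_coeff_pow_entry_telescope:
  fixes A :: "'a :: comm_ring_1 mat"
  assumes A: "A \<in> carrier_mat n n" and i: "i < n" and j: "j < n"
  defines "\<beta> k m \<equiv> coeff (adj_mat (char_poly_matrix A) $$ (i, m)) k"
  defines "U k \<equiv> \<Sum>m<n. (if k > 0 then \<beta> (k - 1) m else 0) * (A ^\<^sub>m k) $$ (m, j)"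
  shows "coeff (char_poly A) k * (A ^\<^sub>m k) $$ (i, j) = U k - U (Suc k)"
proof -
  have "coeff (char_poly A) k * (A ^\<^sub>m k) $$ (i, j)
      = (\<Sum>m<n. if i = m then coeff (char_poly A) k * (A ^\<^sub>m k) $$ (m, j) else 0)"
    using i by simp
  also have "\<dots> = (\<Sum>m<n. (if i = m then coeff (char_poly A) k else 0) * (A ^\<^sub>m k) $$ (m, j))"
    by (intro sum.cong) auto
  also have "\<dots> = (\<Sum>m<n. ((if k > 0 then \<beta> (k - 1) m else 0)
      - (\<Sum>m'<n. \<beta> k m' * A $$ (m', m))) * (A ^\<^sub>m k) $$ (m, j))"
    by (intro sum.cong refl)
      (simp add: coeff_adj_char_poly_matrix[OF A i, folded \<beta>_def, symmetric])
  also have "\<dots> = U k - (\<Sum>m<n. (\<Sum>m'<n. \<beta> k m' * A $$ (m', m)) * (A ^\<^sub>m k) $$ (m, j))"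
    unfolding U_def by (simp add: left_diff_distrib sum_subtractf)
  also have "(\<Sum>m<n. (\<Sum>m'<n. \<beta> k m' * A $$ (m', m)) * (A ^\<^sub>m k) $$ (m, j))
      = (\<Sum>m'<n. \<beta> k m' * (\<Sum>m<n. A $$ (m', m) * (A ^\<^sub>m k) $$ (m, j)))"
    by (simp only: sum_distrib_left sum_distrib_right mult.assoc) (rule sum.swap)
  also have "\<dots> = U (Suc k)"
    unfolding U_def pow_mat_Suc_left[OF A] using A j
    by (intro sum.cong refl) (simp add: scalar_prod_def lessThan_atLeast0)
  finally show ?thesis .
qed

theorem cayley_hamilton_entry:
  fixes A :: "'a :: comm_ring_1 mat"
  assumes A: "A \<in> carrier_mat n n" and i: "i < n" and j: "j < n"
    and N: "degree (char_poly A) < N"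
  shows "(\<Sum>k<N. coeff (char_poly A) k * (A ^\<^sub>m k) $$ (i, j)) = 0"
proof -
  define \<beta> where "\<beta> k m = coeff (adj_mat (char_poly_matrix A) $$ (i, m)) k" for k m
  define U where "U k = (\<Sum>m<n. (if k > 0 then \<beta> (k - 1) m else 0) * (A ^\<^sub>m k) $$ (m, j))" for k
  have step: "coeff (char_poly A) k * (A ^\<^sub>m k) $$ (i, j) = U k - U (Suc k)" for k
    unfolding U_def \<beta>_def by (rule char_poly_coeff_pow_entry_telescope[OF A i j])
  define D where "D = (\<Sum>m<n. degree (adj_mat (char_poly_matrix A) $$ (i, m)))"
  define N' where "N' = max N (D + 2)"
  have "U N' = 0"
  proof -
    have "degree (adj_mat (char_poly_matrix A) $$ (i, m)) \<le> D" if "m < n" for m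
      unfolding D_def using that by (intro member_le_sum) auto
    then have "\<beta> (N' - 1) m = 0" if "m < n" for m
      using that unfolding \<beta>_def N'_def by (intro coeff_eq_0) fastforce
    moreover have "N' > 0" unfolding N'_def by simp
    ultimately show ?thesis unfolding U_def by simp
  qed
  have "(\<Sum>k<N'. coeff (char_poly A) k * (A ^\<^sub>m k) $$ (i, j)) = (\<Sum>k<N'. U k - U (Suc k))"
    by (simp only: step)
  also have "\<dots> = U 0 - U N'" by (rule sum_lessThan_telescope')
  also have "\<dots> = 0" using \<open>U N' = 0\<close> by (simp add: U_def)
  finally have "(\<Sum>k<N'. coeff (char_poly A) k * (A ^\<^sub>m k) $$ (i, j)) = 0" .
  moreover have "(\<Sum>k<N'. coeff (char_poly A) k * (A ^\<^sub>m k) $$ (i, j))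
      = (\<Sum>k<N. coeff (char_poly A) k * (A ^\<^sub>m k) $$ (i, j))"
    unfolding N'_def using N by (intro sum.mono_neutral_right) (auto simp: coeff_eq_0)
  ultimately show ?thesis by simp
qed

section \<open>Orbits under a matrix with irreducible characteristic polynomial\<close>

locale matrix_functional =
  fixes n :: nat and A :: "'a :: field mat" and f :: "'a vec"
  assumes A: "A \<in> carrier_mat n n" and f: "f \<in> carrier_vec n"
begin

text \<open>\<open>apply_poly g x = f \<bullet> (g(A) x)\<close>; the matrix \<open>g(A)\<close> itself is never formed.\<close>

definition apply_poly :: "'a poly \<Rightarrow> 'a vec \<Rightarrow> 'a" where
  "apply_poly g x = (\<Sum>k<Suc (degree g). coeff g k * (f \<bullet> (A ^\<^sub>m k *\<^sub>v x)))"

definition annihilators :: "'a poly set" where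
  "annihilators = {g. \<forall>x\<in>carrier_vec n. apply_poly g x = 0}"

lemma apply_poly_eq_sum:
  "degree g < N \<Longrightarrow> apply_poly g x = (\<Sum>k<N. coeff g k * (f \<bullet> (A ^\<^sub>m k *\<^sub>v x)))"
  unfolding apply_poly_def by (intro sum.mono_neutral_left) (auto simp: coeff_eq_0)

lemma apply_poly_add: "apply_poly (g + h) x = apply_poly g x + apply_poly h x"
proof -
  define N where "N = Suc (max (degree g) (degree h))"
  have "degree (g + h) < N" "degree g < N" "degree h < N"
    unfolding N_def using degree_add_le_max[of g h] by auto
  then show ?thesis by (simp add: apply_poly_eq_sum distrib_right sum.distrib)
qed

lemma apply_poly_smult: "apply_poly (Polynomial.smult c g) x = c * apply_poly g x"
proof -
  have "apply_poly (Polynomial.smult c g) x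
      = (\<Sum>k<Suc (degree g). coeff (Polynomial.smult c g) k * (f \<bullet> (A ^\<^sub>m k *\<^sub>v x)))"
    using degree_smult_le[of c g] by (intro apply_poly_eq_sum) simp
  then show ?thesis
    unfolding apply_poly_def by (simp only: coeff_smult sum_distrib_left mult.assoc)
qed

lemma apply_poly_monom_mult:
  assumes "x \<in> carrier_vec n"
  shows "apply_poly (pCons 0 g) x = apply_poly g (A *\<^sub>v x)"
proof -
  have "apply_poly (pCons 0 g) x = (\<Sum>k<Suc (Suc (degree g)). coeff (pCons 0 g) k * (f \<bullet> (A ^\<^sub>m k *\<^sub>v x)))"
    by (rule apply_poly_eq_sum) (cases "g = 0", auto)
  also have "\<dots> = apply_poly g (A *\<^sub>v x)"
    unfolding sum.lessThan_Suc_shift apply_poly_def using A assms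
    by (simp add: assoc_mult_mat_vec[OF mult_carrier_mat[OF pow_carrier_mat[OF A] A] A])
  finally show ?thesis .
qed

lemma annihilators_add: "g \<in> annihilators \<Longrightarrow> h \<in> annihilators \<Longrightarrow> g + h \<in> annihilators"
  unfolding annihilators_def by (simp add: apply_poly_add)

lemma annihilators_mult: "g \<in> annihilators \<Longrightarrow> a * g \<in> annihilators"
proof (induction a rule: pCons_induct)
  case 0
  then show ?case by (simp add: annihilators_def apply_poly_def)
next
  case (pCons c a)
  have "Polynomial.smult c g \<in> annihilators" "pCons 0 (a * g) \<in> annihilators"
    using pCons A by (simp_all add: annihilators_def apply_poly_smult apply_poly_monom_mult)
  then show ?case by (simp add: annihilators_add)
qed

lemma char_poly_annihilator: "char_poly A \<in> annihilators"
  unfolding annihilators_def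
proof (intro CollectI ballI)
  fix x :: "'a vec" assume x: "x \<in> carrier_vec n"
  let ?c = "coeff (char_poly A)"
  have deg: "degree (char_poly A) = n" using degree_monic_char_poly[OF A] by simp
  have "apply_poly (char_poly A) x
      = (\<Sum>k<Suc n. ?c k * (\<Sum>i<n. \<Sum>j<n. f $ i * ((A ^\<^sub>m k) $$ (i, j) * x $ j)))"
    unfolding apply_poly_def deg using A x f
    by (simp add: scalar_prod_def lessThan_atLeast0 sum_distrib_left)
  also have "\<dots> = (\<Sum>k<Suc n. \<Sum>i<n. \<Sum>j<n. ?c k * (f $ i * ((A ^\<^sub>m k) $$ (i, j) * x $ j)))"
    by (simp only: sum_distrib_left)
  also have "\<dots> = (\<Sum>i<n. \<Sum>j<n. \<Sum>k<Suc n. ?c k * (f $ i * ((A ^\<^sub>m k) $$ (i, j) * x $ j)))"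
    by (subst sum.swap) (rule sum.cong[OF refl], rule sum.swap)
  also have "\<dots> = (\<Sum>i<n. \<Sum>j<n. (f $ i * x $ j) * (\<Sum>k<Suc n. ?c k * (A ^\<^sub>m k) $$ (i, j)))"
    by (simp only: sum_distrib_left ac_simps)
  also have "\<dots> = 0"
    using cayley_hamilton_entry[OF A _ _, of _ _ "Suc n"] deg by simp
  finally show "apply_poly (char_poly A) x = 0" .
qed

lemma zero_if_one_annihilator:
  assumes "1 \<in> annihilators"
  shows "f = 0\<^sub>v n"
proof (rule eq_vecI)
  fix q assume "q < dim_vec (0\<^sub>v n :: 'a vec)"
  then have q: "q < n" by simp
  have "\<forall>x\<in>carrier_vec n. f \<bullet> x = 0"
    using assms A unfolding annihilators_def apply_poly_def by simp
  then have "f \<bullet> unit_vec n q = 0" using unit_vec_carrier by blast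
  then show "f $ q = 0\<^sub>v n $ q" using q by simp
qed (use f in simp)

lemma transpose_pow_mult_vec_carrier: "transpose_mat (A ^\<^sub>m k) *\<^sub>v f \<in> carrier_vec n"
  using A f by (simp add: mult_mat_vec_carrier[of _ n n])

lemma scalar_prod_transpose_pow_mult_vec:
  "x \<in> carrier_vec n \<Longrightarrow> (transpose_mat (A ^\<^sub>m k) *\<^sub>v f) \<bullet> x = f \<bullet> (A ^\<^sub>m k *\<^sub>v x)"
  by (rule transpose_vec_mult_scalar[OF pow_carrier_mat[OF A] _ f])

text \<open>For irreducible \<open>P\<close>, a nonzero annihilator of least degree divides \<open>P\<close>, so it is
  either a unit (and then \<open>f = 0\<close>) or an associate of \<open>P\<close>.\<close>

lemma degree_annihilator_ge:
  assumes irr: "irreducible (char_poly A)" and "f \<noteq> 0\<^sub>v n"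
    and g: "g \<in> annihilators" "g \<noteq> 0"
  shows "n \<le> degree g"
proof -
  let ?P = "char_poly A"
  obtain h where h: "h \<in> annihilators" "h \<noteq> 0"
    and min: "\<And>h'. h' \<in> annihilators \<Longrightarrow> h' \<noteq> 0 \<Longrightarrow> degree h \<le> degree h'"
    using ex_has_least_nat[of "\<lambda>h. h \<in> annihilators \<and> h \<noteq> 0" g degree] g by blast
  have "?P mod h = ?P + (- (?P div h)) * h"
    using div_mult_mod_eq[of ?P h] by (simp add: algebra_simps)
  moreover have "?P + (- (?P div h)) * h \<in> annihilators"
    by (rule annihilators_add[OF char_poly_annihilator annihilators_mult[OF h(1)]])
  ultimately have "?P mod h \<in> annihilators" by (simp only:)
  have "?P mod h = 0"
  proof (rule ccontr)
    assume "?P mod h \<noteq> 0"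
    then have "degree h \<le> degree (?P mod h)" using min \<open>?P mod h \<in> annihilators\<close> by blast
    moreover have "degree (?P mod h) < degree h"
      using degree_mod_less[OF h(2), of ?P] \<open>?P mod h \<noteq> 0\<close> by blast
    ultimately show False by simp
  qed
  then have "?P dvd h \<or> h dvd 1"
    using irreducibleD'[OF irr, of h] by (simp add: mod_eq_0_iff_dvd)
  moreover have "\<not> h dvd 1"
  proof
    assume "h dvd 1"
    then obtain u where "1 = h * u" by (rule dvdE)
    then have "1 \<in> annihilators" using annihilators_mult[OF h(1), of u] by (simp add: mult.commute)
    then show False using zero_if_one_annihilator \<open>f \<noteq> 0\<^sub>v n\<close> by blast
  qed
  ultimately have "degree ?P \<le> degree h" using h(2) dvd_imp_degree_le by blast
  then show ?thesis using min[OF g] degree_monic_char_poly[OF A] by simp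
qed

text \<open>A dependency among the \<open>(A\<^sup>k)\<^sup>T f\<close>, \<open>k < n\<close>, is a nonzero annihilator of degree \<open>< n\<close>.\<close>

lemma indep_functionals_transpose_pow:
  assumes irr: "irreducible (char_poly A)" and "f \<noteq> 0\<^sub>v n"
  shows "indep_functionals n (\<lambda>k. transpose_mat (A ^\<^sub>m k) *\<^sub>v f) {..<n}"
  unfolding indep_functionals_def
proof (intro allI impI)
  fix c
  assume rel: "\<forall>x\<in>carrier_vec n. (\<Sum>k\<in>{..<n}. c k * ((transpose_mat (A ^\<^sub>m k) *\<^sub>v f) \<bullet> x)) = 0"
  define g where "g = (\<Sum>k<n. monom (c k) k)"
  have coeff_g: "coeff g k = (if k < n then c k else 0)" for k
    unfolding g_def by (simp add: coeff_sum)
  then have "g = 0 \<or> degree g < n"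
    by (metis leading_coeff_0_iff)
  then have "g = 0"
  proof
    assume deg: "degree g < n"
    have "apply_poly g x = (\<Sum>k<n. c k * ((transpose_mat (A ^\<^sub>m k) *\<^sub>v f) \<bullet> x))"
      if "x \<in> carrier_vec n" for x
      unfolding apply_poly_eq_sum[OF deg] using that
      by (intro sum.cong refl) (simp add: coeff_g scalar_prod_transpose_pow_mult_vec)
    then have "g \<in> annihilators" using rel by (simp add: annihilators_def)
    then show "g = 0" using degree_annihilator_ge[OF irr \<open>f \<noteq> 0\<^sub>v n\<close>] deg by fastforce
  qed
  then show "\<forall>k\<in>{..<n}. c k = 0" using coeff_g by (metis coeff_0 lessThan_iff)
qed

end

theorem orbit_orthogonal_imp_zero:
  fixes A :: "bit mat"
  assumes A: "A \<in> carrier_mat n n" and irr: "irreducible (char_poly A)"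
    and f: "f \<in> carrier_vec n" and x0: "x0 \<in> carrier_vec n" "x0 \<noteq> 0\<^sub>v n"
    and orth: "\<forall>i. f \<bullet> (A ^\<^sub>m i *\<^sub>v x0) = 0"
  shows "f = 0\<^sub>v n"
proof (rule ccontr)
  assume "f \<noteq> 0\<^sub>v n"
  interpret matrix_functional n A f using A f by unfold_locales
  let ?r = "\<lambda>k. transpose_mat (A ^\<^sub>m k) *\<^sub>v f"
  let ?S = "solutions n ?r {..<n} (\<lambda>_. 0)"
  have "card ?S * 2 ^ card {..<n} = 2 ^ n"
    by (rule card_solutions)
      (simp_all add: transpose_pow_mult_vec_carrier indep_functionals_transpose_pow[OF irr \<open>f \<noteq> 0\<^sub>v n\<close>])
  then have "card ?S = 1" by simp
  then obtain z where "?S = {z}" by (rule card_1_singletonE)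
  moreover have "x0 \<in> ?S"
    using x0(1) orth by (simp add: solutions_def scalar_prod_transpose_pow_mult_vec)
  moreover have "0\<^sub>v n \<in> ?S"
    using transpose_pow_mult_vec_carrier by (simp add: solutions_def)
  ultimately show False using x0(2) by simp
qed

section \<open>Binary digits and cells\<close>

definition binary_value :: "nat \<Rightarrow> (nat \<Rightarrow> bit) \<Rightarrow> nat" where
  "binary_value v d = (\<Sum>l<v. of_bool (d l = 1) * 2 ^ (v - 1 - l))"

lemma binary_value_Suc:
  "binary_value (Suc v) d = of_bool (d 0 = 1) * 2 ^ v + binary_value v (\<lambda>l. d (Suc l))"
  unfolding binary_value_def sum.lessThan_Suc_shift
  by (simp only: diff_Suc_1 diff_zero diff_Suc_eq_diff_pred)

lemma binary_value_less: "binary_value v d < 2 ^ v"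
proof (induction v arbitrary: d)
  case 0
  then show ?case by (simp add: binary_value_def)
next
  case (Suc v)
  have "binary_value v (\<lambda>l. d (Suc l)) < 2 ^ v" by (rule Suc.IH)
  then show ?case by (cases "d 0 = 1") (simp_all add: binary_value_Suc)
qed

lemma binary_value_eq_iff: "binary_value v d = binary_value v e \<longleftrightarrow> (\<forall>l<v. d l = e l)"
proof (induction v arbitrary: d e)
  case 0
  then show ?case by (simp add: binary_value_def)
next
  case (Suc v)
  let ?d = "\<lambda>l. d (Suc l)" and ?e = "\<lambda>l. e (Suc l)"
  have "binary_value (Suc v) d = binary_value (Suc v) e
      \<longleftrightarrow> d 0 = e 0 \<and> binary_value v ?d = binary_value v ?e"
    using binary_value_less[of v ?d] binary_value_less[of v ?e]
    by (cases "d 0"; cases "e 0") (auto simp: binary_value_Suc)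
  then show ?case using Suc.IH[of ?d ?e] by (simp add: All_less_Suc2)
qed

lemma binary_value_surj:
  assumes "n < 2 ^ v"
  shows "\<exists>d. binary_value v d = n"
  using assms
proof (induction v arbitrary: n)
  case 0
  then show ?case by (simp add: binary_value_def)
next
  case (Suc v)
  obtain d where d: "binary_value v d = n mod 2 ^ v"
    using Suc.IH[of "n mod 2 ^ v"] by auto
  let ?d = "\<lambda>l. if l = 0 then of_bool (2 ^ v \<le> n) else d (l - 1)"
  have "binary_value (Suc v) ?d = of_bool (2 ^ v \<le> n) * 2 ^ v + n mod 2 ^ v"
    by (simp add: binary_value_Suc d)
  also have "\<dots> = n"
    using Suc.prems by (cases "2 ^ v \<le> n") (auto simp: le_mod_geq)
  finally show ?case by blast
qed

lemma sum_powr_tail: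
  assumes "v \<le> w"
  shows "(\<Sum>l\<in>{v..<w}. (2::real) powr (real v - 1 - real l)) = 1 - 2 powr (real v - real w)"
  using assms
proof (induction w rule: dec_induct)
  case base
  then show ?case by simp
next
  case (step w)
  have "(2::real) powr (real v - real w) = 2 powr ((real v - 1 - real w) + 1)" by simp
  also have "\<dots> = 2 powr (real v - 1 - real w) * 2" by (subst powr_add) simp
  finally show ?case using step by (simp add: algebra_simps)
qed

lemma scaled_binary_fraction_split:
  fixes d :: "nat \<Rightarrow> bit"
  assumes vw: "v \<le> w"
  shows "(\<Sum>l=1..w. bit_val (d (l - 1)) * 2 powr - real l) * 2 ^ v
    = real (binary_value v d) + (\<Sum>l\<in>{v..<w}. bit_val (d l) * 2 powr (real v - 1 - real l))"
proof -
  let ?t = "\<lambda>l. bit_val (d l) * 2 powr (real v - 1 - real l)"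
  have "(\<Sum>l=1..w. bit_val (d (l - 1)) * 2 powr - real l) = (\<Sum>l<w. bit_val (d l) * 2 powr - real (Suc l))"
    by (rule sum.reindex_bij_witness[of _ Suc "\<lambda>l. l - 1"]) auto
  moreover have "2 powr - real (Suc l) * 2 ^ v = (2::real) powr (real v - 1 - real l)" for l
  proof -
    have "real v - 1 - real l = - real (Suc l) + real v" by simp
    then have "(2::real) powr (real v - 1 - real l) = 2 powr - real (Suc l) * 2 powr real v"
      by (simp only: powr_add)
    then show ?thesis by (simp add: powr_realpow)
  qed
  ultimately have "(\<Sum>l=1..w. bit_val (d (l - 1)) * 2 powr - real l) * 2 ^ v = (\<Sum>l<w. ?t l)"
    by (simp add: sum_distrib_right mult.assoc)
  also have "\<dots> = (\<Sum>l<v. ?t l) + (\<Sum>l\<in>{v..<w}. ?t l)"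
    using vw by (simp add: lessThan_atLeast0 sum.atLeastLessThan_concat)
  also have "(\<Sum>l<v. ?t l) = real (binary_value v d)"
    unfolding binary_value_def of_nat_sum
  proof (rule sum.cong[OF refl])
    fix l assume "l \<in> {..<v}"
    then have "real v - 1 - real l = real (v - 1 - l)" by auto
    then have "(2::real) powr (real v - 1 - real l) = 2 ^ (v - 1 - l)"
      by (metis powr_realpow zero_less_numeral)
    then show "?t l = real (of_bool (d l = 1) * 2 ^ (v - 1 - l))"
      by (cases "d l") (simp_all add: bit_val_def)
  qed
  finally show ?thesis .
qed

text \<open>Truncating a binary fraction \<open>0.d\<^sub>0d\<^sub>1\<dots>d\<^sub>w\<^sub>-\<^sub>1\<close> to \<open>v\<close> digits; the neglected tail
  is below \<open>1 - 2\<^sup>v\<^sup>-\<^sup>w\<close>.\<close>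

lemma floor_binary_fraction:
  fixes d :: "nat \<Rightarrow> bit"
  assumes vw: "v \<le> w"
  shows "\<lfloor>(\<Sum>l=1..w. bit_val (d (l - 1)) * 2 powr - real l) * 2 ^ v\<rfloor> = int (binary_value v d)"
proof -
  let ?tail = "\<Sum>l\<in>{v..<w}. bit_val (d l) * 2 powr (real v - 1 - real l)"
  have "0 \<le> ?tail"
    by (intro sum_nonneg) (simp add: bit_val_def)
  moreover have "?tail \<le> (\<Sum>l\<in>{v..<w}. (2::real) powr (real v - 1 - real l))"
    by (intro sum_mono) (simp add: bit_val_def)
  moreover have "(0::real) < 2 powr (real v - real w)" by simp
  ultimately have "?tail < 1" using sum_powr_tail[OF vw] by linarith
  with \<open>0 \<le> ?tail\<close> show ?thesis
    unfolding scaled_binary_fraction_split[OF vw] by (simp add: floor_eq_iff)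
qed

lemma cell_uval:
  "v \<le> w \<Longrightarrow> cell v (uval A B w x j) = int (binary_value v (outp A B x j))"
  unfolding cell_def uval_def by (rule floor_binary_fraction[of v w "outp A B x j"])

section \<open>Equidistribution and linear relations\<close>

definition output_functional :: "bit mat \<Rightarrow> bit mat \<Rightarrow> nat \<times> nat \<Rightarrow> bit vec" where
  "output_functional A B jl = row (B * A ^\<^sub>m fst jl) (snd jl)"

lemma output_functional_carrier:
  "A \<in> carrier_mat p p \<Longrightarrow> B \<in> carrier_mat w p \<Longrightarrow> output_functional A B jl \<in> carrier_vec p"
  unfolding output_functional_def by (simp add: carrier_vecI)

lemma outp_eq_output_functional:
  assumes A: "A \<in> carrier_mat p p" and B: "B \<in> carrier_mat w p" and x: "x \<in> carrier_vec p"
    and l: "l < w"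
  shows "outp A B x j l = output_functional A B (j, l) \<bullet> x"
proof -
  have "B *\<^sub>v (A ^\<^sub>m j *\<^sub>v x) = (B * A ^\<^sub>m j) *\<^sub>v x"
    using A B x by (simp add: assoc_mult_mat_vec[of B w p "A ^\<^sub>m j" p x])
  then show ?thesis
    unfolding outp_def state_def output_functional_def using B l by simp
qed

lemma cells_eq_solutions:
  assumes A: "A \<in> carrier_mat p p" and B: "B \<in> carrier_mat w p" and vw: "v \<le> w"
  shows "{x \<in> carrier_vec p. \<forall>j<k. cell v (uval A B w x j) = int (binary_value v (\<lambda>l. t (j, l)))}
       = solutions p (output_functional A B) ({..<k} \<times> {..<v}) t"
proof -
  have "(\<forall>j<k. cell v (uval A B w x j) = int (binary_value v (\<lambda>l. t (j, l))))
      \<longleftrightarrow> (\<forall>jl\<in>{..<k} \<times> {..<v}. output_functional A B jl \<bullet> x = t jl)"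
    if "x \<in> carrier_vec p" for x
    using that vw by (auto simp: cell_uval binary_value_eq_iff outp_eq_output_functional[OF A B])
  then show ?thesis unfolding solutions_def by auto
qed

lemma of_nat_eq_two_powr_diff:
  assumes "(N::nat) * 2 ^ a = 2 ^ b"
  shows "real N = 2 powr (real b - real a)"
proof -
  have "real N * 2 ^ a = 2 ^ b" using arg_cong[OF assms, of real] by simp
  then show ?thesis by (simp add: powr_diff powr_realpow field_simps)
qed

lemma indep_functionals_if_equidist:
  assumes A: "A \<in> carrier_mat p p" and B: "B \<in> carrier_mat w p" and vw: "v \<le> w"
    and equi: "equidist p A B w v k"
  shows "indep_functionals p (output_functional A B) ({..<k} \<times> {..<v})"
proof (rule indep_functionals_if_solvable)
  fix t :: "nat \<times> nat \<Rightarrow> bit"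
  let ?c = "\<lambda>j. int (binary_value v (\<lambda>l. t (j, l)))"
  have "\<forall>j<k. 0 \<le> ?c j \<and> ?c j < 2 ^ v"
    using binary_value_less by simp
  then have "real (card {x \<in> carrier_vec p. \<forall>j<k. cell v (uval A B w x j) = ?c j})
      = 2 powr (real p - real k * real v)"
    by (rule mp[OF spec[OF equi[unfolded equidist_def], of ?c]])
  then show "solutions p (output_functional A B) ({..<k} \<times> {..<v}) t \<noteq> {}"
    unfolding cells_eq_solutions[OF A B vw] by auto
qed simp

lemma equidist_if_indep_functionals:
  assumes A: "A \<in> carrier_mat p p" and B: "B \<in> carrier_mat w p" and vw: "v \<le> w"
    and indep: "indep_functionals p (output_functional A B) ({..<k} \<times> {..<v})"
  shows "equidist p A B w v k"
  unfolding equidist_def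
proof (intro allI impI)
  fix c :: "nat \<Rightarrow> int" assume c: "\<forall>j<k. 0 \<le> c j \<and> c j < 2 ^ v"
  have "\<exists>d. int (binary_value v d) = c j" if "j < k" for j
  proof -
    have "nat (c j) < 2 ^ v" using c that by (simp add: nat_less_iff)
    then obtain d where "binary_value v d = nat (c j)" using binary_value_surj by blast
    then show ?thesis using c that by (intro exI[of _ d]) simp
  qed
  then have "\<forall>j. \<exists>d. j < k \<longrightarrow> int (binary_value v d) = c j" by blast
  from choice[OF this] obtain D where D: "\<forall>j<k. int (binary_value v (D j)) = c j" by blast
  let ?t = "\<lambda>jl. D (fst jl) (snd jl)"
  let ?S = "solutions p (output_functional A B) ({..<k} \<times> {..<v}) ?t"
  have "{x \<in> carrier_vec p. \<forall>j<k. cell v (uval A B w x j) = c j} = ?S"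
    using cells_eq_solutions[OF A B vw, of k ?t] D by simp
  moreover have "card ?S * 2 ^ (k * v) = 2 ^ p"
    using card_solutions[OF _ _ indep] output_functional_carrier[OF A B]
    by (simp add: card_cartesian_product)
  ultimately show "real (card {x \<in> carrier_vec p. \<forall>j<k. cell v (uval A B w x j) = c j})
      = 2 powr (real p - real k * real v)"
    using of_nat_eq_two_powr_diff[of _ "k * v" p] by simp
qed

theorem equidist_iff_indep_functionals:
  assumes "A \<in> carrier_mat p p" and "B \<in> carrier_mat w p" and "v \<le> w"
  shows "equidist p A B w v k \<longleftrightarrow> indep_functionals p (output_functional A B) ({..<k} \<times> {..<v})"
  using indep_functionals_if_equidist[OF assms] equidist_if_indep_functionals[OF assms] by blast

lemma equidist_le:
  assumes A: "A \<in> carrier_mat p p" and B: "B \<in> carrier_mat w p" and "1 \<le> v" "v \<le> w"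
    and "equidist p A B w v k"
  shows "k \<le> p"
proof -
  have "indep_functionals p (output_functional A B) ({..<k} \<times> {..<v})"
    using assms(5) equidist_iff_indep_functionals[OF A B assms(4)] by blast
  then have "card ({..<k} \<times> {..<v}) \<le> p"
    using output_functional_carrier[OF A B] by (intro indep_functionals_card_le) auto
  then have "k * v \<le> p" by (simp add: card_cartesian_product)
  moreover have "k \<le> k * v" using \<open>1 \<le> v\<close> by simp
  ultimately show ?thesis by linarith
qed

lemma kv_greatest:
  assumes A: "A \<in> carrier_mat p p" and B: "B \<in> carrier_mat w p" and "1 \<le> v" "v \<le> w"
  shows "equidist p A B w v (kv p A B w v)" "\<not> equidist p A B w v (Suc (kv p A B w v))"
proof -
  have "equidist p A B w v 0"
    using A B \<open>v \<le> w\<close> by (simp add: equidist_iff_indep_functionals indep_functionals_def)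
  moreover note bound = equidist_le[OF assms]
  ultimately show "equidist p A B w v (kv p A B w v)"
    unfolding kv_def by (rule GreatestI_nat)
  show "\<not> equidist p A B w v (Suc (kv p A B w v))"
  proof
    assume "equidist p A B w v (Suc (kv p A B w v))"
    then have "Suc (kv p A B w v) \<le> kv p A B w v"
      unfolding kv_def by (rule Greatest_le_nat[OF _ bound])
    then show False by simp
  qed
qed

lemma outp_shift:
  assumes "A \<in> carrier_mat p p" "x0 \<in> carrier_vec p"
  shows "outp A B x0 (i + j) l = outp A B (A ^\<^sub>m i *\<^sub>v x0) j l"
  unfolding outp_def state_def using assms
  by (simp add: add.commute[of i j] pow_mat_add assoc_mult_mat_vec[of _ p p _ p])

lemma relation_eq_functional_sum:
  assumes A: "A \<in> carrier_mat p p" and B: "B \<in> carrier_mat w p" and x0: "x0 \<in> carrier_vec p"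
    and vw: "v \<le> w"
  shows "(\<Sum>l=1..v. \<Sum>j=0..k. W j (l - 1) * outp A B x0 (i + j) (l - 1))
       = (\<Sum>jl\<in>{..<Suc k} \<times> {..<v}. W (fst jl) (snd jl) * (output_functional A B jl \<bullet> (A ^\<^sub>m i *\<^sub>v x0)))"
proof -
  have "(\<Sum>l=1..v. \<Sum>j=0..k. W j (l - 1) * outp A B x0 (i + j) (l - 1))
      = (\<Sum>l<v. \<Sum>j<Suc k. W j l * outp A B x0 (i + j) l)"
    by (rule sum.reindex_bij_witness[of _ Suc "\<lambda>l. l - 1"]) (auto simp: atLeast0AtMost lessThan_Suc_atMost)
  also have "\<dots> = (\<Sum>l<v. \<Sum>j<Suc k. W j l * outp A B (A ^\<^sub>m i *\<^sub>v x0) j l)"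
    by (intro sum.cong refl) (simp add: outp_shift[OF A x0])
  also have "\<dots> = (\<Sum>j<Suc k. \<Sum>l<v. W j l * (output_functional A B (j, l) \<bullet> (A ^\<^sub>m i *\<^sub>v x0)))"
    using mult_mat_vec_carrier[OF pow_carrier_mat[OF A] x0] vw
    by (subst sum.swap) (auto simp: outp_eq_output_functional[OF A B] intro!: sum.cong)
  also have "\<dots> = (\<Sum>jl\<in>{..<Suc k} \<times> {..<v}. W (fst jl) (snd jl) * (output_functional A B jl \<bullet> (A ^\<^sub>m i *\<^sub>v x0)))"
    by (simp add: sum.cartesian_product split_beta)
  finally show ?thesis .
qed

lemma indep_functionals_on_orbit:
  fixes A :: "bit mat"
  assumes A: "A \<in> carrier_mat n n" and irr: "irreducible (char_poly A)"
    and x0: "x0 \<in> carrier_vec n" "x0 \<noteq> 0\<^sub>v n"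
    and r: "\<forall>i\<in>I. r i \<in> carrier_vec n" and indep: "indep_functionals n r I"
    and rel: "\<forall>m. (\<Sum>i\<in>I. c i * (r i \<bullet> (A ^\<^sub>m m *\<^sub>v x0))) = 0"
  shows "\<forall>i\<in>I. c i = 0"
proof -
  define f where "f = vec n (\<lambda>q. \<Sum>i\<in>I. c i * r i $ q)"
  have f: "f \<in> carrier_vec n" unfolding f_def by simp
  have f_apply: "f \<bullet> x = (\<Sum>i\<in>I. c i * (r i \<bullet> x))" if x: "x \<in> carrier_vec n" for x
  proof -
    have "f \<bullet> x = x \<bullet> f" using comm_scalar_prod[OF f x] .
    also have "\<dots> = (\<Sum>i\<in>I. c i * (x \<bullet> r i))" unfolding f_def using x r by (rule scalar_prod_lincomb)
    also have "\<dots> = (\<Sum>i\<in>I. c i * (r i \<bullet> x))"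
      using x r by (intro sum.cong refl) (simp add: comm_scalar_prod[of x n])
    finally show ?thesis .
  qed
  have "\<forall>m. f \<bullet> (A ^\<^sub>m m *\<^sub>v x0) = 0"
    using rel f_apply mult_mat_vec_carrier[OF pow_carrier_mat[OF A] x0(1)] by simp
  then have "f = 0\<^sub>v n" by (rule orbit_orthogonal_imp_zero[OF A irr f x0])
  then have "\<forall>x\<in>carrier_vec n. (\<Sum>i\<in>I. c i * (r i \<bullet> x)) = 0"
    using f_apply by (metis scalar_prod_left_zero)
  with indep show ?thesis unfolding indep_functionals_def by blast
qed

lemma nontrivial_relation_if_dependent:
  assumes A: "A \<in> carrier_mat p p" and B: "B \<in> carrier_mat w p" and x0: "x0 \<in> carrier_vec p"
    and vw: "v \<le> w"
    and dep: "\<not> indep_functionals p (output_functional A B) ({..<Suc k} \<times> {..<v})"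
  shows "\<exists>W :: nat \<Rightarrow> nat \<Rightarrow> bit. (\<exists>j\<le>k. \<exists>l\<in>{1..v}. W j (l - 1) \<noteq> 0) \<and>
    (\<forall>i. (\<Sum>l=1..v. \<Sum>j=0..k. W j (l - 1) * outp A B x0 (i + j) (l - 1)) = 0)"
proof -
  obtain c where c: "\<forall>x\<in>carrier_vec p.
      (\<Sum>jl\<in>{..<Suc k} \<times> {..<v}. c jl * (output_functional A B jl \<bullet> x)) = 0"
    and "\<exists>jl\<in>{..<Suc k} \<times> {..<v}. c jl \<noteq> 0"
    using dep unfolding indep_functionals_def by blast
  define W where "W j l = c (j, l)" for j l
  obtain j l where "j \<le> k" "l < v" "W j l \<noteq> 0"
    using \<open>\<exists>jl\<in>_. c jl \<noteq> 0\<close> by (auto simp: W_def less_Suc_eq_le)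
  then have nonzero: "\<exists>j\<le>k. \<exists>l\<in>{1..v}. W j (l - 1) \<noteq> 0"
    by (intro exI[of _ j] conjI bexI[of _ "Suc l"]) auto
  have vanishes: "\<forall>i. (\<Sum>l=1..v. \<Sum>j=0..k. W j (l - 1) * outp A B x0 (i + j) (l - 1)) = 0"
  proof
    fix i
    have "(\<Sum>jl\<in>{..<Suc k} \<times> {..<v}.
        W (fst jl) (snd jl) * (output_functional A B jl \<bullet> (A ^\<^sub>m i *\<^sub>v x0))) = 0"
      using c mult_mat_vec_carrier[OF pow_carrier_mat[OF A] x0] by (simp add: W_def)
    then show "(\<Sum>l=1..v. \<Sum>j=0..k. W j (l - 1) * outp A B x0 (i + j) (l - 1)) = 0"
      using relation_eq_functional_sum[OF A B x0 vw, where k = k and W = W and i = i] by simp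
  qed
  show ?thesis
  proof (rule exI[of _ W])
    show "(\<exists>j\<le>k. \<exists>l\<in>{1..v}. W j (l - 1) \<noteq> 0) \<and>
      (\<forall>i. (\<Sum>l=1..v. \<Sum>j=0..k. W j (l - 1) * outp A B x0 (i + j) (l - 1)) = 0)"
      using nonzero vanishes by (rule conjI)
  qed
qed

lemma relation_trivial_if_independent:
  assumes A: "A \<in> carrier_mat p p" and B: "B \<in> carrier_mat w p"
    and x0: "x0 \<in> carrier_vec p" "x0 \<noteq> 0\<^sub>v p" and irr: "irreducible (char_poly A)"
    and vw: "v \<le> w"
    and indep: "indep_functionals p (output_functional A B) ({..<Suc k} \<times> {..<v})"
    and rel: "\<forall>i. (\<Sum>l=1..v. \<Sum>j=0..k. W j (l - 1) * outp A B x0 (i + j) (l - 1)) = 0"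
  shows "\<forall>j\<le>k. \<forall>l\<in>{1..v}. W j (l - 1) = 0"
proof -
  have "\<forall>jl\<in>{..<Suc k} \<times> {..<v}. output_functional A B jl \<in> carrier_vec p"
    using output_functional_carrier[OF A B] by blast
  moreover have "\<forall>m. (\<Sum>jl\<in>{..<Suc k} \<times> {..<v}.
      W (fst jl) (snd jl) * (output_functional A B jl \<bullet> (A ^\<^sub>m m *\<^sub>v x0))) = 0"
    using rel relation_eq_functional_sum[OF A B x0(1) vw, where k = k and W = W] by simp
  ultimately have "\<forall>jl\<in>{..<Suc k} \<times> {..<v}. W (fst jl) (snd jl) = 0"
    by (rule indep_functionals_on_orbit[OF A irr x0 _ indep])
  then show ?thesis by fastforce
qed

theorem mainTheorem2:
  fixes p w v :: nat and A B :: "bit mat" and x0 :: "bit vec"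
  assumes "A \<in> carrier_mat p p" and "B \<in> carrier_mat w p" and "x0 \<in> carrier_vec p"
    and "1 \<le> v" and "v \<le> w"
    and "primitive_poly p (char_poly A)"
    and "x0 \<noteq> 0\<^sub>v p"
    and "hpoly p A B x0 0 \<noteq> 0"
  shows "(\<exists>W :: nat \<Rightarrow> nat \<Rightarrow> bit.
            (\<exists>j\<le>kv p A B w v. \<exists>l\<in>{1..v}. W j (l - 1) \<noteq> 0) \<and>
            (\<forall>i. (\<Sum>l=1..v. \<Sum>j=0..kv p A B w v. W j (l - 1) * outp A B x0 (i + j) (l - 1)) = 0))
       \<and> (\<forall>k < kv p A B w v. \<forall>W :: nat \<Rightarrow> nat \<Rightarrow> bit.
            (\<forall>i. (\<Sum>l=1..v. \<Sum>j=0..k. W j (l - 1) * outp A B x0 (i + j) (l - 1)) = 0) \<longrightarrow>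
            (\<forall>j\<le>k. \<forall>l\<in>{1..v}. W j (l - 1) = 0))"
proof -
  note A = assms(1) and B = assms(2) and x0 = assms(3,7) and vw = assms(5)
  have irr: "irreducible (char_poly A)" using assms(6) unfolding primitive_poly_def by blast
  have indep: "indep_functionals p (output_functional A B) ({..<kv p A B w v} \<times> {..<v})"
    and dep: "\<not> indep_functionals p (output_functional A B) ({..<Suc (kv p A B w v)} \<times> {..<v})"
    using kv_greatest[OF A B assms(4) vw] unfolding equidist_iff_indep_functionals[OF A B vw] .
  have "\<forall>k < kv p A B w v. \<forall>W :: nat \<Rightarrow> nat \<Rightarrow> bit.
      (\<forall>i. (\<Sum>l=1..v. \<Sum>j=0..k. W j (l - 1) * outp A B x0 (i + j) (l - 1)) = 0) \<longrightarrow>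
      (\<forall>j\<le>k. \<forall>l\<in>{1..v}. W j (l - 1) = 0)"
  proof (intro allI impI ballI)
    fix k j l and W :: "nat \<Rightarrow> nat \<Rightarrow> bit"
    assume "k < kv p A B w v"
      and rel: "\<forall>i. (\<Sum>l=1..v. \<Sum>j=0..k. W j (l - 1) * outp A B x0 (i + j) (l - 1)) = 0"
      and "j \<le> k" "l \<in> {1..v}"
    have "indep_functionals p (output_functional A B) ({..<Suc k} \<times> {..<v})"
      using \<open>k < kv p A B w v\<close>
      by (intro indep_functionals_subset[OF indep]) (auto simp: less_Suc_eq_le)
    then show "W j (l - 1) = 0"
      using relation_trivial_if_independent[OF A B x0 irr vw _ rel] \<open>j \<le> k\<close> \<open>l \<in> {1..v}\<close> by blast
  qed
  with nontrivial_relation_if_dependent[OF A B x0(1) vw dep] show ?thesis by (rule conjI)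
qed

end
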